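(* Let $d\ge1$, $\delta>0$, and let $\varphi$ be a random vector in $\mathbb{S}^{d-1}$ for which there exist constants $\alpha\ge1$ and $s>0$ with $$\Pr\big(|\langle x,\varphi\rangle|\le t\big)\le\alpha t^s\quad\text{for all }0\le t\le1\text{ and all }x\in\mathbb{S}^{d-1}.$$ Let $\varphi_1,\dots,\varphi_N$ be i.i.d. copies of $\varphi$, and $\epsilon_1,\dots,\epsilon_N$ i.i.d. uniform on $[-\delta,\delta]$, independent of the $\varphi_n$. Let $P_N=\bigcap_{n=1}^N\{u\in\mathbb{R}^d:|\langle u,\varphi_n\rangle-\epsilon_n|\le\delta\}$ and $W_N=\sup\{\|u\|:u\in P_N\}$. Then for all $N\ge(d+2)/s$, $$\mathbb{E}|W_N|^2\le\frac{10^5\delta^2d^2(2\alpha)^{2/s}\ln^2\!\big(16(2\alpha)^{1/s}\big)}{(N+1)(N+2)}+\delta^2\,32^{d+1}(2\alpha)^{(d+1)/s}\Big(\frac12\Big)^N.$$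
   Context: $W_N$ is the worst case error of consistent reconstruction: for any $x\in\mathbb{R}^d$ with measurements $q_n=\langle x,\varphi_n\rangle+\epsilon_n$, every $\tilde x$ satisfying $|\langle\tilde x,\varphi_n\rangle-q_n|\le\delta$ for all $n$ has $\|x-\tilde x\|\le W_N$, and $W_N$ is the supremum of such errors. *)

theory Defs
  imports "HOL-Probability.Probability"
begin

definition cr_polytope :: "nat \<Rightarrow> real \<Rightarrow> (nat \<Rightarrow> 'a::euclidean_space) \<Rightarrow> (nat \<Rightarrow> real) \<Rightarrow> 'a set" where
  "cr_polytope N \<delta> \<phi> \<epsilon> = {u. \<forall>n<N. \<bar>inner u (\<phi> n) - \<epsilon> n\<bar> \<le> \<delta>}"

text \<open>Worst case error W_N = sup of norms over P_N, valued in [0,\<infinity>] (so unbounded P_N gives \<infinity>).\<close>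
definition worst_case_error :: "nat \<Rightarrow> real \<Rightarrow> (nat \<Rightarrow> 'a::euclidean_space) \<Rightarrow> (nat \<Rightarrow> real) \<Rightarrow> ennreal" where
  "worst_case_error N \<delta> \<phi> \<epsilon> = (SUP u\<in>cr_polytope N \<delta> \<phi> \<epsilon>. ennreal (norm u))"

definition cr_joint :: "'a::euclidean_space measure \<Rightarrow> real \<Rightarrow> nat \<Rightarrow> (nat \<Rightarrow> 'a \<times> real) measure" where
  "cr_joint \<mu> \<delta> N = PiM {..<N} (\<lambda>_. \<mu> \<Otimes>\<^sub>M uniform_measure lborel {-\<delta>..\<delta>})"

end

theory Submission
  imports Defs
begin

text \<open>If \<open>W\<^sub>N > r\<close> and all \<open>|\<epsilon>\<^sub>n| \<le> \<delta>\<close>, the convex polytope \<open>P\<^sub>N\<close> contains \<open>0\<close> and hence a point \<open>r y\<close> with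
  \<open>\<parallel>y\<parallel> = 1\<close>; replacing \<open>y\<close> by a point \<open>x\<close> of a finite net of the sphere, all \<open>N\<close> independent samples
  are nearly consistent with \<open>r x\<close>. A union bound over the net thus bounds \<open>\<P>(W\<^sub>N > r)\<close> by
  \<open>#net \<cdot> q(r)\<^sup>N\<close>. For moderate \<open>r\<close>, with probability \<open>\<ge> 1/2\<close> the frame vector satisfies
  \<open>|\<langle>x, \<phi>\<rangle>| > 1/\<beta>\<close>, where \<open>\<alpha> \<beta>\<^sup>-\<^sup>s = 1/2\<close>, and then the uniform noise makes the sample inconsistent with
  probability of order \<open>r/(\<delta>\<beta>)\<close>; this gives \<open>q(r) \<le> 1 - r/(8\<delta>\<beta>)\<close> and an exponential tail in \<open>N r\<close>. For large
  \<open>r\<close>, consistency forces \<open>|\<langle>x, \<phi>\<rangle>| \<le> 3\<delta>/r\<close>, so \<open>q(r) \<le> \<alpha> (3\<delta>/r)\<^sup>s\<close>, and \<open>N s \<ge> d + 2\<close> turns the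
  tail into \<open>2\<^sup>-\<^sup>N r\<^sup>-\<^sup>3\<close>. The second moment is then \<open>\<integral> 2r \<P>(W\<^sub>N > r) dr\<close>.\<close>

lemma power_diff_le_mult_power:
  fixes a b :: real
  assumes "0 \<le> b" "b \<le> a"
  shows "a ^ n - b ^ n \<le> real n * (a - b) * a ^ (n - 1)"
proof (induction n)
  case (Suc n)
  have "a ^ Suc n - b ^ Suc n = a * (a ^ n - b ^ n) + (a - b) * b ^ n" by (simp add: algebra_simps)
  also have "\<dots> \<le> a * (real n * (a - b) * a ^ (n - 1)) + (a - b) * a ^ n"
    using Suc assms by (intro add_mono mult_left_mono mult_right_mono power_mono) auto
  also have "\<dots> = real (Suc n) * (a - b) * a ^ (Suc n - 1)"
    by (cases n) (auto simp: algebra_simps)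
  finally show ?case .
qed simp

text \<open>The balls of radius \<open>h\<close> around the points of \<open>S\<close> are disjoint and fill part of the
  shell \<open>1 - h < \<parallel>z\<parallel> < 1 + h\<close>; compare volumes.\<close>
lemma card_mult_power_le_sphere_shell:
  fixes S :: "'a::euclidean_space set"
  assumes fin: "finite S" and sph: "S \<subseteq> sphere 0 1"
    and sep: "\<And>x y. x \<in> S \<Longrightarrow> y \<in> S \<Longrightarrow> x \<noteq> y \<Longrightarrow> 2 * h \<le> dist x y"
    and h: "0 < h" "h \<le> 1"
  shows "real (card S) * h ^ DIM('a) \<le> (1 + h) ^ DIM('a) - (1 - h) ^ DIM('a)"
proof -
  define V where "V = unit_ball_vol (real DIM('a))"
  have V: "V > 0" by (simp add: V_def)
  let ?R = "ball (0::'a) (1 + h) - cball 0 (1 - h)"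
  have disj: "disjoint_family_on (\<lambda>x. ball x h) S"
    unfolding disjoint_family_on_def
  proof (intro ballI impI equals0I)
    fix x y z assume "x \<in> S" "y \<in> S" "x \<noteq> y" "z \<in> ball x h \<inter> ball y h"
    then have "dist x y < 2 * h" "2 * h \<le> dist x y"
      using sep dist_triangle2[of x y z] by auto
    then show False by simp
  qed
  have sub: "(\<Union>x\<in>S. ball x h) \<subseteq> ?R"
  proof
    fix z assume "z \<in> (\<Union>x\<in>S. ball x h)"
    then obtain x where x: "x \<in> S" "dist x z < h" by auto
    have nx: "norm x = 1" using sph x by auto
    have "norm z < 1 + h" using x nx norm_triangle_ineq2[of z x]
      by (smt (verit) dist_norm norm_minus_commute norm_triangle_ineq)
    moreover have "norm z > 1 - h" using x nx norm_triangle_ineq2[of x z]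
      by (simp add: dist_norm)
    ultimately show "z \<in> ?R" by auto
  qed
  have "ennreal (V * (real (card S) * h ^ DIM('a))) = (\<Sum>x\<in>S. emeasure lborel (ball x h))"
    using h by (simp add: emeasure_ball V_def ennreal_of_nat_eq_real_of_nat ennreal_mult mult_ac)
  also have "\<dots> = emeasure lborel (\<Union>x\<in>S. ball x h)"
    by (rule sum_emeasure) (use fin disj in auto)
  also have "\<dots> \<le> emeasure lborel ?R"
    by (rule emeasure_mono[OF sub]) auto
  also have "\<dots> = emeasure lborel (ball (0::'a) (1 + h)) - emeasure lborel (cball (0::'a) (1 - h))"
    using h by (intro emeasure_Diff) (auto simp: emeasure_ball emeasure_cball)
  also have "\<dots> = ennreal (V * ((1 + h) ^ DIM('a) - (1 - h) ^ DIM('a)))"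
    using h by (simp add: emeasure_ball emeasure_cball V_def ennreal_minus right_diff_distrib)
  finally have "V * (real (card S) * h ^ DIM('a)) \<le> V * ((1 + h) ^ DIM('a) - (1 - h) ^ DIM('a))"
    using h V power_mono[of "1 - h" "1 + h" "DIM('a)"] by (simp add: ennreal_le_iff)
  then show ?thesis using V by simp
qed

lemma card_separated_sphere_le:
  fixes S :: "'a::euclidean_space set"
  assumes fin: "finite S" and sph: "S \<subseteq> sphere 0 1"
    and sep: "\<And>x y. x \<in> S \<Longrightarrow> y \<in> S \<Longrightarrow> x \<noteq> y \<Longrightarrow> \<gamma> < dist x y"
    and \<gamma>: "0 < \<gamma>" "\<gamma> \<le> 1"
  shows "real (card S) \<le> 2 * real DIM('a) * (1 + 2 / \<gamma>) ^ (DIM('a) - 1)"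
proof -
  define h where "h = \<gamma> / 2"
  have h: "0 < h" "h \<le> 1" using \<gamma> by (auto simp: h_def)
  obtain e where e: "DIM('a) = Suc e" using DIM_positive not0_implies_Suc by blast
  have "real (card S) * h ^ DIM('a) \<le> (1 + h) ^ DIM('a) - (1 - h) ^ DIM('a)"
    using sep h by (intro card_mult_power_le_sphere_shell[OF fin sph]) (auto simp: h_def less_imp_le)
  also have "\<dots> \<le> real DIM('a) * (2 * h) * (1 + h) ^ (DIM('a) - 1)"
    using power_diff_le_mult_power[of "1 - h" "1 + h" "DIM('a)"] h by simp
  finally have "h * (real (card S) * h ^ e) \<le> h * (2 * real DIM('a) * (1 + h) ^ e)"
    unfolding e by (simp add: mult_ac)
  then have "real (card S) * h ^ e \<le> 2 * real DIM('a) * (1 + h) ^ e"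
    using h by simp
  then have "real (card S) \<le> 2 * real DIM('a) * ((1 + h) / h) ^ e"
    using h by (simp add: power_divide pos_le_divide_eq)
  also have "(1 + h) / h = 1 + 2 / \<gamma>" using h by (simp add: h_def field_simps)
  finally show ?thesis using e by simp
qed

text \<open>A maximal \<open>\<gamma>\<close>-separated subset of the sphere is a \<open>\<gamma>\<close>-net.\<close>
lemma sphere_net_exists:
  fixes \<gamma> :: real
  assumes \<gamma>: "0 < \<gamma>" "\<gamma> \<le> 1"
  obtains S :: "'a::euclidean_space set" where "finite S" "S \<subseteq> sphere 0 1"
    "real (card S) \<le> 2 * real DIM('a) * (1 + 2 / \<gamma>) ^ (DIM('a) - 1)"
    "\<And>y. norm y = 1 \<Longrightarrow> \<exists>x\<in>S. norm (y - x) \<le> \<gamma>"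
proof -
  define B where "B = 2 * real DIM('a) * (1 + 2 / \<gamma>) ^ (DIM('a) - 1)"
  define separated where "separated S \<longleftrightarrow> finite S \<and> S \<subseteq> sphere 0 1 \<and>
      (\<forall>x\<in>S. \<forall>y\<in>S. x \<noteq> y \<longrightarrow> \<gamma> < dist x y)" for S :: "'a set"
  have bounded: "real (card S) \<le> B" if "separated S" for S
    unfolding B_def
    by (rule card_separated_sphere_le[OF _ _ _ \<gamma>]) (use that in \<open>auto simp: separated_def\<close>)
  have "\<exists>S. separated S \<and> card S = 0"
    by (intro exI[of _ "{}"]) (simp add: separated_def)
  moreover have "\<forall>k. (\<exists>S. separated S \<and> card S = k) \<longrightarrow> k \<le> nat \<lceil>B\<rceil>"
  proof (intro allI impI, elim exE conjE)
    fix k S assume "separated S" "card S = k"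
    then show "k \<le> nat \<lceil>B\<rceil>" using bounded[of S] by linarith
  qed
  ultimately obtain k where k: "\<exists>S. separated S \<and> card S = k"
      "\<forall>k'. (\<exists>S. separated S \<and> card S = k') \<longrightarrow> k' \<le> k"
    by (rule Nat.ex_has_greatest_nat[elim_format]) blast
  then obtain S where S: "separated S" "card S = k" by blast
  have "\<exists>x\<in>S. norm (y - x) \<le> \<gamma>" if y: "norm y = 1" for y
  proof (rule ccontr)
    assume far: "\<not> (\<exists>x\<in>S. norm (y - x) \<le> \<gamma>)"
    then have "y \<notin> S" using \<gamma> by (metis diff_self norm_zero order.strict_implies_order)
    moreover have "separated (insert y S)"
      using S(1) y far by (auto simp: separated_def dist_norm norm_minus_commute not_le)
    ultimately have "Suc k \<le> k"
      using k(2) S by (metis card_insert_disjoint separated_def)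
    then show False by simp
  qed
  with S(1) bounded[OF S(1)] show ?thesis
    unfolding separated_def B_def by (intro that) auto
qed

lemma nn_integral_linear_atLeastAtMost:
  fixes b :: real assumes "0 \<le> b"
  shows "(\<integral>\<^sup>+ t. ennreal (indicator {0..b} t * (2 * t)) \<partial>lborel) = ennreal (b\<^sup>2)"
proof -
  have "((\<lambda>t. t powr 1) has_integral (b powr (1 + 1) / (1 + 1))) {0..b}"
    using has_integral_powr_from_0[of 1 b] assms by simp
  moreover have "b powr (1 + 1) / (1 + 1) = b\<^sup>2 / 2" using assms
    by (cases "b = 0") (simp_all add: powr_realpow)
  ultimately have "((\<lambda>t. t) has_integral (b\<^sup>2 / 2)) {0..b}"
    using has_integral_eq[of "{0..b}" "\<lambda>t. t powr 1" "\<lambda>t. t"] by simp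
  from has_integral_mult_right[OF this, of 2] have "((\<lambda>t. 2 * t) has_integral b\<^sup>2) {0..b}"
    by simp
  then show ?thesis by (intro nn_integral_has_integral_lebesgue) auto
qed

lemma nn_integral_inverse_square_atLeast:
  fixes c :: real assumes "0 < c"
  shows "(\<integral>\<^sup>+ t. ennreal (indicator {c..} t / t\<^sup>2) \<partial>lborel) = ennreal (1 / c)"
proof -
  have "((\<lambda>t. t powr (-2)) has_integral - (c powr (-2 + 1)) / (-2 + 1)) {c..}"
    using has_integral_powr_to_inf[of "-2" c] assms by simp
  moreover have "- (c powr (-2 + 1)) / (-2 + 1) = 1 / c"
    using assms by (simp add: powr_minus_divide)
  moreover have "\<And>t. t \<in> {c..} \<Longrightarrow> t powr (-2) = 1 / t\<^sup>2"
    using assms by (simp add: powr_minus_divide powr_realpow)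
  ultimately have "((\<lambda>t. 1 / t\<^sup>2) has_integral (1 / c)) {c..}"
    using has_integral_eq[of "{c..}" "\<lambda>t. t powr (-2)" "\<lambda>t. 1 / t\<^sup>2"] by simp
  then have "(\<integral>\<^sup>+ t. ennreal (indicator {c..} t * (1 / t\<^sup>2)) \<partial>lborel) = ennreal (1 / c)"
    by (intro nn_integral_has_integral_lebesgue) auto
  then show ?thesis by simp
qed

lemma ennreal_le_nn_integral_square_layers:
  fixes c :: ennreal
  shows "c \<le> (\<integral>\<^sup>+ t. (if 0 < t \<and> ennreal (t\<^sup>2) < c then ennreal (2 * t) else 0) \<partial>lborel)"
proof (rule dense_le)
  fix y assume y: "y < c"
  then obtain y0 where y0: "y = ennreal y0" "0 \<le> y0"
    by (cases y) (auto simp: top_unique)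
  have "y = (\<integral>\<^sup>+ t. ennreal (indicator {0..sqrt y0} t * (2 * t)) \<partial>lborel)"
    using y0 by (simp add: nn_integral_linear_atLeastAtMost)
  also have "\<dots> \<le> (\<integral>\<^sup>+ t. (if 0 < t \<and> ennreal (t\<^sup>2) < c then ennreal (2 * t) else 0) \<partial>lborel)"
  proof (intro nn_integral_mono)
    fix t :: real
    show "ennreal (indicator {0..sqrt y0} t * (2 * t))
        \<le> (if 0 < t \<and> ennreal (t\<^sup>2) < c then ennreal (2 * t) else 0)"
    proof (cases "t \<in> {0<..sqrt y0}")
      case True
      then have "t\<^sup>2 \<le> (sqrt y0)\<^sup>2" by (intro power_mono) auto
      then have "ennreal (t\<^sup>2) \<le> y" using y0 by (simp add: ennreal_leI)
      then have "ennreal (t\<^sup>2) < c" using y by (rule order.strict_trans1)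
      then show ?thesis using True by auto
    next
      case False
      then show ?thesis by (cases "t = 0") (auto simp: indicator_def)
    qed
  qed
  finally show "y \<le> \<dots>" .
qed
text \<open>\<open>F\<close> need not be measurable, so its tail event is only controlled through a measurable
  superset.\<close>
definition outer_tail_le :: "'b measure \<Rightarrow> ('b \<Rightarrow> ennreal) \<Rightarrow> real \<Rightarrow> ennreal \<Rightarrow> bool" where
  "outer_tail_le M F r B \<longleftrightarrow> (\<exists>E\<in>sets M. {\<omega>\<in>space M. ennreal r < F \<omega>} \<subseteq> E \<and> emeasure M E \<le> B)"

lemma outer_tail_le_mono: "outer_tail_le M F r B \<Longrightarrow> B \<le> B' \<Longrightarrow> outer_tail_le M F r B'"
  unfolding outer_tail_le_def by (meson order.trans)

lemma outer_tail_le_space: "emeasure M (space M) \<le> B \<Longrightarrow> outer_tail_le M F r B"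
  unfolding outer_tail_le_def by blast

lemma emeasure_square_less_le_outer_tail:
  fixes F g :: "'b \<Rightarrow> ennreal"
  assumes g: "g \<in> borel_measurable M" "\<And>\<omega>. g \<omega> \<le> (F \<omega>)\<^sup>2"
    and t: "0 < t" and tail: "outer_tail_le M F t B"
  shows "emeasure M {\<omega>\<in>space M. ennreal (t\<^sup>2) < g \<omega>} \<le> B"
proof -
  obtain E where E: "E \<in> sets M" "{\<omega>\<in>space M. ennreal t < F \<omega>} \<subseteq> E" "emeasure M E \<le> B"
    using tail by (auto simp: outer_tail_le_def)
  have "{\<omega>\<in>space M. ennreal (t\<^sup>2) < g \<omega>} \<subseteq> E"
  proof
    fix \<omega> assume \<omega>: "\<omega> \<in> {\<omega>\<in>space M. ennreal (t\<^sup>2) < g \<omega>}"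
    have "ennreal t < F \<omega>"
    proof (rule ccontr)
      assume "\<not> ennreal t < F \<omega>"
      then have "(F \<omega>)\<^sup>2 \<le> (ennreal t)\<^sup>2" by (intro power_mono) auto
      then have "g \<omega> \<le> ennreal (t\<^sup>2)"
        using g(2)[of \<omega>] t by (simp add: ennreal_power)
      with \<omega> show False by auto
    qed
    with \<omega> E(2) show "\<omega> \<in> E" by auto
  qed
  then show ?thesis using E(1,3) by (meson emeasure_mono order.trans)
qed

text \<open>Layer cake: \<open>\<integral> F\<^sup>2 = \<integral>\<^sub>0\<^sup>\<infinity> 2t \<P>(F > t) dt\<close>, here as an upper bound, proved through simple
  functions below \<open>F\<^sup>2\<close> and Tonelli.\<close>
lemma nn_integral_square_le_tail:
  fixes M :: "'b measure" and F :: "'b \<Rightarrow> ennreal" and f :: "real \<Rightarrow> ennreal"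
  assumes "finite_measure M" and tail: "\<And>t. 0 < t \<Longrightarrow> outer_tail_le M F t (f t)"
  shows "(\<integral>\<^sup>+ \<omega>. (F \<omega>)\<^sup>2 \<partial>M) \<le> (\<integral>\<^sup>+ t. indicator {0<..} t * (ennreal (2 * t) * f t) \<partial>lborel)"
proof -
  interpret finite_measure M by fact
  interpret pair_sigma_finite M lborel
    by (simp add: pair_sigma_finite_def lborel.sigma_finite_measure_axioms sigma_finite_measure_axioms)
  show ?thesis
    unfolding nn_integral_def[of M]
  proof (rule SUP_least, safe)
    fix g assume sg: "simple_function M g" and g_le: "g \<le> (\<lambda>\<omega>. (F \<omega>)\<^sup>2)"
    have g: "g \<in> borel_measurable M" using sg by (rule borel_measurable_simple_function)
    define h where "h \<omega> t = (if 0 < t \<and> ennreal (t\<^sup>2) < g \<omega> then ennreal (2 * t) else 0)" for \<omega> t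
    have h: "case_prod h \<in> borel_measurable (M \<Otimes>\<^sub>M lborel)"
      unfolding h_def using g by measurable
    have "integral\<^sup>S M g = (\<integral>\<^sup>+ \<omega>. g \<omega> \<partial>M)" by (simp add: nn_integral_eq_simple_integral sg)
    also have "\<dots> \<le> (\<integral>\<^sup>+ \<omega>. (\<integral>\<^sup>+ t. h \<omega> t \<partial>lborel) \<partial>M)"
      unfolding h_def by (intro nn_integral_mono ennreal_le_nn_integral_square_layers)
    also have "\<dots> = (\<integral>\<^sup>+ t. (\<integral>\<^sup>+ \<omega>. h \<omega> t \<partial>M) \<partial>lborel)"
      by (rule Fubini'[OF h, symmetric])
    also have "\<dots> \<le> (\<integral>\<^sup>+ t. indicator {0<..} t * (ennreal (2 * t) * f t) \<partial>lborel)"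
    proof (intro nn_integral_mono)
      fix t :: real
      show "(\<integral>\<^sup>+ \<omega>. h \<omega> t \<partial>M) \<le> indicator {0<..} t * (ennreal (2 * t) * f t)"
      proof (cases "0 < t")
        case True
        have "{\<omega>\<in>space M. ennreal (t\<^sup>2) < g \<omega>} \<in> sets M" using g by measurable
        then have "(\<integral>\<^sup>+ \<omega>. h \<omega> t \<partial>M) = ennreal (2 * t) * emeasure M {\<omega>\<in>space M. ennreal (t\<^sup>2) < g \<omega>}"
          using True by (subst nn_integral_cmult_indicator[symmetric])
            (auto intro!: nn_integral_cong simp: h_def indicator_def)
        also have "\<dots> \<le> ennreal (2 * t) * f t"
          using g g_le True tail[OF True]
          by (intro mult_left_mono emeasure_square_less_le_outer_tail) (auto simp: le_fun_def)
        finally show ?thesis using True by simp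
      qed (simp add: h_def)
    qed
    finally show "integral\<^sup>S M g \<le> (\<integral>\<^sup>+ t. indicator {0<..} t * (ennreal (2 * t) * f t) \<partial>lborel)" .
  qed
qed

lemma nn_integral_square_le_of_tails:
  fixes M :: "'b measure" and F :: "'b \<Rightarrow> ennreal"
  assumes M: "finite_measure M" and pos: "0 < b" "0 < c" "0 \<le> C1" "0 \<le> C2"
    and tail: "\<And>t. 0 < t \<Longrightarrow> outer_tail_le M F t
      (ennreal ((if t \<le> b then 1 else C1 / t ^ 3) + (if c \<le> t then C2 / t ^ 3 else 0)))"
  shows "(\<integral>\<^sup>+ \<omega>. (F \<omega>)\<^sup>2 \<partial>M) \<le> ennreal (b\<^sup>2 + 2 * C1 / b + 2 * C2 / c)"
proof -
  define g where "g t = (if t \<le> b then 1 else C1 / t ^ 3) + (if c \<le> t then C2 / t ^ 3 else 0)"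
    for t :: real
  define h1 h2 h3 where "h1 t = indicator {0..b} t * (2 * t)"
    and "h2 t = indicator {b..} t / t\<^sup>2" and "h3 t = indicator {c..} t / t\<^sup>2" for t :: real
  have cube: "2 * t * C / t ^ 3 = 2 * C / t\<^sup>2" if "0 < t" for t C :: real
    using that by (simp add: power2_eq_square power3_eq_cube field_simps)
  have pointwise: "2 * t * g t \<le> h1 t + 2 * C1 * h2 t + 2 * C2 * h3 t" if "0 < t" for t
    using that pos by (auto simp: g_def h1_def h2_def h3_def cube distrib_left indicator_def)
  have nonneg: "0 \<le> h1 t" "0 \<le> h2 t" "0 \<le> h3 t" for t
    using pos by (auto simp: h1_def h2_def h3_def indicator_def)
  have "(\<integral>\<^sup>+ \<omega>. (F \<omega>)\<^sup>2 \<partial>M) \<le> (\<integral>\<^sup>+ t. indicator {0<..} t * (ennreal (2 * t) * ennreal (g t)) \<partial>lborel)"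
    using tail by (intro nn_integral_square_le_tail[OF M]) (simp add: g_def)
  also have "\<dots> \<le> (\<integral>\<^sup>+ t. ennreal (h1 t) + ennreal (2 * C1) * ennreal (h2 t)
      + ennreal (2 * C2) * ennreal (h3 t) \<partial>lborel)"
  proof (intro nn_integral_mono)
    fix t :: real
    show "indicator {0<..} t * (ennreal (2 * t) * ennreal (g t))
      \<le> ennreal (h1 t) + ennreal (2 * C1) * ennreal (h2 t) + ennreal (2 * C2) * ennreal (h3 t)"
    proof (cases "0 < t")
      case True
      have "indicator {0<..} t * (ennreal (2 * t) * ennreal (g t)) = ennreal (2 * t * g t)"
        using True by (simp add: ennreal_mult')
      also have "\<dots> \<le> ennreal (h1 t + 2 * C1 * h2 t + 2 * C2 * h3 t)"
        using pointwise[OF True] by (rule ennreal_leI)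
      also have "\<dots> = ennreal (h1 t) + ennreal (2 * C1) * ennreal (h2 t) + ennreal (2 * C2) * ennreal (h3 t)"
        using pos nonneg[of t] by (simp add: ennreal_plus ennreal_mult)
      finally show ?thesis .
    qed simp
  qed
  also have "\<dots> = ennreal (b\<^sup>2) + ennreal (2 * C1) * ennreal (1 / b) + ennreal (2 * C2) * ennreal (1 / c)"
    using pos unfolding h1_def h2_def h3_def
    by (simp add: nn_integral_add nn_integral_cmult nn_integral_linear_atLeastAtMost
        nn_integral_inverse_square_atLeast)
  also have "\<dots> = ennreal (b\<^sup>2 + 2 * C1 / b + 2 * C2 / c)"
  proof -
    have "ennreal (2 * C) * ennreal (1 / x) = ennreal (2 * C / x)" if "0 \<le> C" "0 < x" for C x :: real
      using that by (subst ennreal_mult[symmetric]) auto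
    then show ?thesis using pos by (simp add: ennreal_plus)
  qed
  finally show ?thesis .
qed

text \<open>For \<open>|a| > \<delta> + r\<close> the bound is \<open>ennreal\<close> of a negative number, i.e. \<open>0\<close>.\<close>
lemma emeasure_uniform_measure_abs_diff_le:
  fixes \<delta> a r :: real
  assumes \<delta>: "0 < \<delta>"
  shows "emeasure (uniform_measure lborel {-\<delta>..\<delta>}) {e. \<bar>a - e\<bar> \<le> r} \<le> ennreal ((\<delta> + r - \<bar>a\<bar>) / (2 * \<delta>))"
proof -
  have "{e. \<bar>a - e\<bar> \<le> r} = {a - r..a + r}" by auto
  then have eq: "emeasure (uniform_measure lborel {-\<delta>..\<delta>}) {e. \<bar>a - e\<bar> \<le> r}
      = emeasure lborel ({-\<delta>..\<delta>} \<inter> {e. \<bar>a - e\<bar> \<le> r}) / ennreal (2 * \<delta>)"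
    using \<delta> by (subst emeasure_uniform_measure) auto
  show ?thesis
  proof (cases "\<bar>a\<bar> \<le> \<delta> + r")
    case True
    define I where "I = (if 0 \<le> a then {a - r..\<delta>} else {-\<delta>..a + r})"
    have "emeasure lborel ({-\<delta>..\<delta>} \<inter> {e. \<bar>a - e\<bar> \<le> r}) \<le> emeasure lborel I"
      by (intro emeasure_mono) (auto simp: I_def)
    also have "\<dots> = ennreal (\<delta> + r - \<bar>a\<bar>)"
      using True by (auto simp: I_def)
    finally have "emeasure lborel ({-\<delta>..\<delta>} \<inter> {e. \<bar>a - e\<bar> \<le> r}) / ennreal (2 * \<delta>)
        \<le> ennreal (\<delta> + r - \<bar>a\<bar>) / ennreal (2 * \<delta>)"
      by (rule divide_right_mono_ennreal)
    also have "\<dots> = ennreal ((\<delta> + r - \<bar>a\<bar>) / (2 * \<delta>))"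
      using \<delta> True by (subst divide_ennreal) auto
    finally show ?thesis unfolding eq .
  next
    case False
    then have "{-\<delta>..\<delta>} \<inter> {e. \<bar>a - e\<bar> \<le> r} = {}" by auto
    then show ?thesis unfolding eq by simp
  qed
qed

lemma (in prob_space) nn_integral_indicator_add_scaled_compl_le:
  assumes S: "S \<in> events" and half: "prob S \<le> 1 / 2" and k: "0 \<le> k" "k \<le> 1"
  shows "(\<integral>\<^sup>+ x. indicator S x + ennreal k * indicator (space M - S) x \<partial>M) \<le> ennreal ((1 + k) / 2)"
proof -
  have "(\<integral>\<^sup>+ x. indicator S x + ennreal k * indicator (space M - S) x \<partial>M)
      = emeasure M S + ennreal k * emeasure M (space M - S)"
    using S by (simp add: nn_integral_add nn_integral_cmult_indicator)
  also have "\<dots> = ennreal (prob S + k * (1 - prob S))"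
    using S k by (simp add: emeasure_eq_measure prob_compl ennreal_mult ennreal_plus)
  also have "\<dots> \<le> ennreal ((1 + k) / 2)"
  proof (rule ennreal_leI)
    have "prob S + k * (1 - prob S) = k + (1 - k) * prob S" by (simp add: algebra_simps)
    also have "\<dots> \<le> k + (1 - k) * (1 / 2)" using k half by (intro add_left_mono mult_left_mono) auto
    finally show "prob S + k * (1 - prob S) \<le> (1 + k) / 2" by (simp add: field_simps)
  qed
  finally show ?thesis .
qed

lemma emeasure_PiM_all_in:
  fixes M :: "'b measure"
  assumes "sigma_finite_measure M" and A: "A \<in> sets M"
  shows "emeasure (PiM {..<N} (\<lambda>_. M)) {\<omega>\<in>space (PiM {..<N} (\<lambda>_. M)). \<forall>n<N. \<omega> n \<in> A}
    = emeasure M A ^ N"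
proof -
  interpret product_sigma_finite "\<lambda>_. M"
    using assms(1) by (simp add: product_sigma_finite_def)
  have "{\<omega>\<in>space (PiM {..<N} (\<lambda>_. M)). \<forall>n<N. \<omega> n \<in> A} = PiE {..<N} (\<lambda>_. A)"
    using sets.sets_into_space[OF A] by (auto simp: space_PiM PiE_def Pi_def)
  then show ?thesis using A by (simp add: emeasure_PiM)
qed

text \<open>\<open>P\<^sub>N\<close> is convex and contains \<open>0\<close>, so with \<open>u \<in> P\<^sub>N\<close> it contains \<open>r u / \<parallel>u\<parallel>\<close>.\<close>
lemma worst_case_error_gt_imp_net_point:
  fixes \<phi> :: "nat \<Rightarrow> 'a::euclidean_space" and \<epsilon> :: "nat \<Rightarrow> real" and S :: "'a set"
  assumes r: "0 < r" and c: "0 \<le> c"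
    and net: "\<And>y. norm y = 1 \<Longrightarrow> \<exists>x\<in>S. norm (y - x) \<le> c / r"
    and noise: "\<And>n. n < N \<Longrightarrow> \<bar>\<epsilon> n\<bar> \<le> \<delta>"
    and W: "ennreal r < worst_case_error N \<delta> \<phi> \<epsilon>"
  shows "\<exists>x\<in>S. \<forall>n<N. \<bar>r * inner x (\<phi> n) - \<epsilon> n\<bar> \<le> \<delta> + c * norm (\<phi> n)"
proof -
  obtain u where u: "u \<in> cr_polytope N \<delta> \<phi> \<epsilon>" "ennreal r < ennreal (norm u)"
    using W unfolding worst_case_error_def by (auto simp: less_SUP_iff)
  have ru: "r < norm u" using u(2) r by (simp add: ennreal_less_iff)
  then have nu: "0 < norm u" using r by linarith
  define t where "t = r / norm u"
  have t: "0 < t" "t \<le> 1" using ru r nu by (auto simp: t_def)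
  define y where "y = u /\<^sub>R norm u"
  have ny: "norm y = 1" using nu by (simp add: y_def)
  obtain x where x: "x \<in> S" "norm (y - x) \<le> c / r" using net[OF ny] by blast
  have "\<bar>r * inner x (\<phi> n) - \<epsilon> n\<bar> \<le> \<delta> + c * norm (\<phi> n)" if n: "n < N" for n
  proof -
    have un: "\<bar>inner u (\<phi> n) - \<epsilon> n\<bar> \<le> \<delta>" using u(1) n by (auto simp: cr_polytope_def)
    have "r * inner y (\<phi> n) = t * inner u (\<phi> n)"
      using nu by (simp add: y_def t_def divide_inverse mult_ac)
    then have "r * inner y (\<phi> n) - \<epsilon> n = t * (inner u (\<phi> n) - \<epsilon> n) - (1 - t) * \<epsilon> n"
      by (simp add: algebra_simps)
    also have "\<bar>\<dots>\<bar> \<le> t * \<bar>inner u (\<phi> n) - \<epsilon> n\<bar> + (1 - t) * \<bar>\<epsilon> n\<bar>"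
      using t abs_triangle_ineq4[of "t * (inner u (\<phi> n) - \<epsilon> n)" "(1 - t) * \<epsilon> n"]
      by (simp add: abs_mult)
    also have "\<dots> \<le> t * \<delta> + (1 - t) * \<delta>"
      using t un noise[OF n] by (intro add_mono mult_left_mono) auto
    finally have near: "\<bar>r * inner y (\<phi> n) - \<epsilon> n\<bar> \<le> \<delta>" by (simp add: algebra_simps)
    have "\<bar>inner (x - y) (\<phi> n)\<bar> \<le> norm (x - y) * norm (\<phi> n)" by (rule Cauchy_Schwarz_ineq2)
    also have "\<dots> \<le> (c / r) * norm (\<phi> n)"
      using x by (intro mult_right_mono) (auto simp: norm_minus_commute)
    finally have "r * \<bar>inner (x - y) (\<phi> n)\<bar> \<le> c * norm (\<phi> n)"
      using r by (simp add: field_simps)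
    moreover have "r * inner x (\<phi> n) - \<epsilon> n = (r * inner y (\<phi> n) - \<epsilon> n) + r * inner (x - y) (\<phi> n)"
      by (simp add: inner_diff_left algebra_simps)
    moreover have "\<bar>r * inner (x - y) (\<phi> n)\<bar> = r * \<bar>inner (x - y) (\<phi> n)\<bar>"
      using r by (simp add: abs_mult)
    ultimately show ?thesis using near by linarith
  qed
  with x show ?thesis by blast
qed

lemma exp_ge_cube_div_27:
  fixes x :: real assumes "0 \<le> x" shows "x ^ 3 / 27 \<le> exp x"
proof -
  have "(x / 3) ^ 3 \<le> (1 + x / 3) ^ 3" using assms by (intro power_mono) auto
  also have "\<dots> \<le> (exp (x / 3)) ^ 3"
    using assms exp_ge_add_one_self[of "x / 3"] by (intro power_mono) auto
  also have "\<dots> = exp x" by (simp add: exp_of_nat_mult[symmetric])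
  finally show ?thesis by (simp add: power_divide)
qed

text \<open>Half of the exponent absorbs the prefactor \<open>M\<close>, the other half beats \<open>r\<^sup>3\<close>.\<close>
lemma mult_exp_le_inverse_cube:
  fixes M a r :: real
  assumes M: "1 \<le> M" and a: "0 < a" and r: "2 * (ln M + 1) / a \<le> r"
  shows "M * exp (- (a * r)) \<le> 216 / (a ^ 3 * r ^ 3)"
proof -
  have "ln M + 1 \<le> a * r / 2" using r a by (simp add: field_simps)
  then have "exp (- (a * r / 2)) \<le> exp (- ln M)" by simp
  also have "\<dots> = 1 / M" using M by (simp add: exp_minus inverse_eq_divide)
  finally have e1: "exp (- (a * r / 2)) \<le> 1 / M" .
  have ar: "0 < a * r" using \<open>ln M + 1 \<le> a * r / 2\<close> M ln_ge_zero[of M] by linarith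
  then have "(a * r / 2) ^ 3 / 27 \<le> exp (a * r / 2)" by (intro exp_ge_cube_div_27) auto
  moreover have "0 < r" using ar a by (simp add: zero_less_mult_iff)
  ultimately have e2: "exp (- (a * r / 2)) \<le> 216 / (a ^ 3 * r ^ 3)"
    using a by (simp add: exp_minus field_simps power_mult_distrib)
  have "M * exp (- (a * r)) = M * (exp (- (a * r / 2)) * exp (- (a * r / 2)))"
    by (simp add: exp_add[symmetric])
  also have "\<dots> \<le> M * ((1 / M) * (216 / (a ^ 3 * r ^ 3)))"
    using e1 e2 M by (intro mult_left_mono mult_mono) auto
  also have "\<dots> = 216 / (a ^ 3 * r ^ 3)" using M by simp
  finally show ?thesis .
qed

lemma one_minus_power_le_exp:
  fixes u :: real
  assumes "0 \<le> u" "u \<le> 1"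
  shows "(1 - u) ^ N \<le> exp (- (real N * u))"
proof -
  have "(1 - u) ^ N \<le> (exp (- u)) ^ N"
    using assms exp_ge_add_one_self[of "- u"] by (intro power_mono) auto
  also have "\<dots> = exp (- (real N * u))" by (simp add: exp_of_nat_mult[symmetric])
  finally show ?thesis .
qed

lemma ln_16_ge_2: "2 \<le> ln (16 :: real)"
proof -
  have "exp (2 :: real) = exp 1 * exp 1" by (simp add: exp_add[symmetric])
  also have "\<dots> \<le> 3 * 3" using exp_le by (intro mult_mono) auto
  finally show ?thesis by (subst ln_ge_iff) auto
qed

lemma ln_net_size_le:
  fixes \<beta> :: real and d :: nat
  assumes \<beta>: "1 \<le> \<beta>" and d: "1 \<le> d"
  shows "ln (2 * real d * (1 + 4 * \<beta>) ^ (d - 1)) + 1 \<le> 2 * real d * ln (16 * \<beta>)"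
proof -
  define l where "l = ln (16 * \<beta>)"
  have "ln 16 \<le> l" using \<beta> by (simp add: l_def)
  then have l: "2 \<le> l" using ln_16_ge_2 by linarith
  have "ln (2 * real d * (1 + 4 * \<beta>) ^ (d - 1)) = ln (2 * real d) + real (d - 1) * ln (1 + 4 * \<beta>)"
    using d \<beta> by (simp add: ln_mult_pos ln_realpow)
  also have "\<dots> \<le> (2 * real d - 1) + (real d - 1) * l"
    using d \<beta> ln_le_minus_one[of "2 * real d"]
    by (intro add_mono mult_mono) (auto simp: l_def of_nat_diff)
  also have "\<dots> \<le> 2 * real d * l - 1"
    using l d mult_left_mono[OF l, of "real d + 1"] by (simp add: algebra_simps)
  finally show ?thesis by (simp add: l_def)
qed

lemma moderate_tail_contribution_le:
  fixes \<delta> \<beta> D K a :: real and N :: nat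
  assumes \<delta>: "0 < \<delta>" and \<beta>: "1 \<le> \<beta>" and D: "1 \<le> D" and N: "1 \<le> N"
    and K: "1 \<le> K" "K \<le> 2 * D * ln (16 * \<beta>)" and a: "a = real N / (8 * \<delta> * \<beta>)"
  shows "(2 * K / a)\<^sup>2 + 2 * (216 / a ^ 3) / (2 * K / a)
    \<le> 10^5 * \<delta>\<^sup>2 * D\<^sup>2 * \<beta>\<^sup>2 * (ln (16 * \<beta>))\<^sup>2 / ((real N + 1) * (real N + 2))"
proof -
  define P where "P = 8 * \<delta> * \<beta>"
  define n where "n = real N"
  define l where "l = ln (16 * \<beta>)"
  have P: "0 < P" using \<delta> \<beta> by (simp add: P_def)
  have n: "1 \<le> n" using N by (simp add: n_def)
  have "ln 16 \<le> l" using \<beta> by (simp add: l_def)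
  then have l: "1 \<le> l" using ln_16_ge_2 by linarith
  have "(2 * K / a)\<^sup>2 + 2 * (216 / a ^ 3) / (2 * K / a) = (P\<^sup>2 / n\<^sup>2) * (4 * K\<^sup>2 + 216 / K)"
    using P K n by (simp add: a P_def n_def field_simps power2_eq_square power3_eq_cube)
  also have "\<dots> \<le> (P\<^sup>2 / n\<^sup>2) * (232 * D\<^sup>2 * l\<^sup>2)"
  proof (rule mult_left_mono)
    have "K\<^sup>2 \<le> (2 * D * l)\<^sup>2" using K by (intro power_mono) (auto simp: l_def)
    moreover have "1 \<le> (D * l)\<^sup>2" using D l by (simp add: one_le_power mult_ge1_I)
    moreover have "216 / K \<le> 216" using K by (simp add: divide_le_eq)
    ultimately show "4 * K\<^sup>2 + 216 / K \<le> 232 * D\<^sup>2 * l\<^sup>2" by (simp add: power_mult_distrib)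
  qed simp
  also have "\<dots> = 14848 * (\<delta>\<^sup>2 * D\<^sup>2 * \<beta>\<^sup>2 * l\<^sup>2) / n\<^sup>2" by (simp add: P_def power_mult_distrib)
  also have "\<dots> \<le> 10^5 * (\<delta>\<^sup>2 * D\<^sup>2 * \<beta>\<^sup>2 * l\<^sup>2) / ((n + 1) * (n + 2))"
  proof -
    have "(n + 1) * (n + 2) = n\<^sup>2 + 3 * n + 2" by (simp add: algebra_simps power2_eq_square)
    moreover have "n \<le> n\<^sup>2" "1 \<le> n\<^sup>2"
      using n mult_ge1_I[OF n n] by (simp_all add: power2_eq_square)
    ultimately have "14848 * ((n + 1) * (n + 2)) \<le> 10^5 * n\<^sup>2" by simp
    then have "14848 / n\<^sup>2 \<le> 10^5 / ((n + 1) * (n + 2))"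
      using n by (simp add: divide_le_eq le_divide_eq mult.commute)
    from mult_right_mono[OF this, of "\<delta>\<^sup>2 * D\<^sup>2 * \<beta>\<^sup>2 * l\<^sup>2"] show ?thesis by simp
  qed
  finally show ?thesis by (simp add: n_def l_def mult_ac)
qed

text \<open>Here \<open>r = t \<delta> \<beta>\<close> with \<open>t \<ge> 4\<close>: the net has at most \<open>2d (3 \<beta> t)\<^sup>d\<^sup>-\<^sup>1\<close> points, each surviving all \<open>N\<close>
  samples with probability at most \<open>(2\<^sup>-\<^sup>1 (3/t)\<^sup>s)\<^sup>N \<le> 2\<^sup>-\<^sup>N (3/t)\<^sup>d\<^sup>+\<^sup>2\<close>.\<close>
lemma large_tail_le:
  fixes \<delta> \<alpha> \<beta> s r :: real and d N :: nat
  assumes \<delta>: "0 < \<delta>" and \<beta>: "1 \<le> \<beta>" and s: "0 < s" and \<beta>_s: "\<beta> powr s = 2 * \<alpha>"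
    and d: "1 \<le> d" and N: "real d + 2 \<le> real N * s" and r: "4 * \<delta> * \<beta> \<le> r"
  shows "2 * real d * (1 + 2 * r / \<delta>) ^ (d - 1) * (\<alpha> * (3 * \<delta> / r) powr s) ^ N
    \<le> 2 * real d * 3 ^ (2 * d + 1) * \<beta> ^ (d + 2) * \<delta> ^ 3 * (1 / 2) ^ N / r ^ 3"
proof -
  have \<alpha>: "0 < \<alpha>" using \<beta> powr_gt_zero[of \<beta> s] by (simp add: \<beta>_s)
  have r0: "0 < r" using \<delta> \<beta> r by (smt (verit) mult_pos_pos)
  define t where "t = r / (\<delta> * \<beta>)"
  have t: "4 \<le> t" using r \<delta> \<beta> by (simp add: t_def le_divide_eq)
  have rt: "r = \<delta> * \<beta> * t" using \<delta> \<beta> by (simp add: t_def)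
  have "1 \<le> \<beta> * t" using \<beta> t by (simp add: mult_ge1_I)
  then have net: "1 + 2 * r / \<delta> \<le> 3 * \<beta> * t" using \<delta> by (simp add: rt)
  have "3 * \<delta> / r = (3 / t) * (1 / \<beta>)" using \<delta> by (simp add: rt)
  then have "\<alpha> * (3 * \<delta> / r) powr s = \<alpha> * ((3 / t) * (1 / \<beta>)) powr s" by (simp only:)
  also have "\<dots> = \<alpha> * ((3 / t) powr s * (1 / \<beta>) powr s)"
    using \<beta> t by (subst powr_mult) auto
  also have "\<dots> = (1 / 2) * (3 / t) powr s"
    using \<alpha> \<beta> \<beta>_s by (simp add: powr_divide)
  finally have q: "\<alpha> * (3 * \<delta> / r) powr s = (1 / 2) * (3 / t) powr s" .
  have "((3 / t) powr s) ^ N = (3 / t) powr (s * real N)"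
    using t by (simp add: powr_realpow[symmetric] powr_powr)
  also have "\<dots> \<le> (3 / t) powr (real (d + 2))"
    using t N by (intro powr_mono') (auto simp: mult.commute)
  also have "\<dots> = (3 / t) ^ (d + 2)" by (rule powr_realpow) (use t in simp)
  finally have qN: "(\<alpha> * (3 * \<delta> / r) powr s) ^ N \<le> (1 / 2) ^ N * (3 / t) ^ (d + 2)"
    unfolding q power_mult_distrib by (intro mult_left_mono) auto
  have "2 * real d * (1 + 2 * r / \<delta>) ^ (d - 1) * (\<alpha> * (3 * \<delta> / r) powr s) ^ N
      \<le> 2 * real d * (3 * \<beta> * t) ^ (d - 1) * ((1 / 2) ^ N * (3 / t) ^ (d + 2))"
    using \<delta> r0 \<alpha> \<beta> t net qN by (intro mult_mono power_mono mult_left_mono) auto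
  also have "\<dots> = 2 * real d * 3 ^ (2 * d + 1) * \<beta> ^ (d + 2) * \<delta> ^ 3 * (1 / 2) ^ N / r ^ 3"
  proof -
    obtain e where e: "d = Suc e" using d by (cases d) auto
    have F1: "(3 * \<beta> * t) ^ e * (3 / t) ^ (Suc e + 2) = 3 ^ (2 * Suc e + 1) * \<beta> ^ e / t ^ 3"
      using t by (simp add: power_mult_distrib power_divide power_add field_simps power_mult
          power2_eq_square power3_eq_cube)
    have F2: "\<beta> ^ (Suc e + 2) * \<delta> ^ 3 / r ^ 3 = \<beta> ^ e / t ^ 3"
      using \<delta> \<beta> t unfolding rt by (simp add: power_mult_distrib power_add field_simps power3_eq_cube)
    have A: "2 * real d * (3 * \<beta> * t) ^ (d - 1) * ((1 / 2) ^ N * (3 / t) ^ (d + 2))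
      = (2 * real d * (1 / 2) ^ N) * ((3 * \<beta> * t) ^ e * (3 / t) ^ (Suc e + 2))"
      unfolding e by (simp only: mult_ac diff_Suc_1)
    have B: "2 * real d * 3 ^ (2 * d + 1) * \<beta> ^ (d + 2) * \<delta> ^ 3 * (1 / 2) ^ N / r ^ 3
      = (2 * real d * (1 / 2) ^ N) * (3 ^ (2 * Suc e + 1) * (\<beta> ^ (Suc e + 2) * \<delta> ^ 3 / r ^ 3))"
      unfolding e by (simp only: mult_ac times_divide_eq_right)
    show ?thesis unfolding A B F1 F2 by (simp only: times_divide_eq_right)
  qed
  finally show ?thesis .
qed

lemma large_tail_contribution_le:
  fixes \<delta> \<beta> :: real and d N :: nat
  assumes \<delta>: "0 < \<delta>" and \<beta>: "0 < \<beta>"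
  shows "2 * (2 * real d * 3 ^ (2 * d + 1) * \<beta> ^ (d + 2) * \<delta> ^ 3 * (1 / 2) ^ N) / (4 * \<delta> * \<beta>)
    \<le> \<delta>\<^sup>2 * 32 ^ (d + 1) * \<beta> ^ (d + 1) * (1 / 2) ^ N"
proof -
  have "real d \<le> 2 ^ d" using less_exp[of d] by (simp add: less_imp_le)
  then have "real d * 3 ^ (2 * d + 1) \<le> 2 ^ d * 3 ^ (2 * d + 1)" by (intro mult_right_mono) auto
  also have "(2 :: real) ^ d * 3 ^ (2 * d + 1) = 3 * 18 ^ d"
    by (simp add: power_mult power_add power_mult_distrib[symmetric])
  also have "\<dots> \<le> 32 * 32 ^ d" by (intro mult_mono power_mono) auto
  finally have "real d * 3 ^ (2 * d + 1) \<le> 32 ^ (d + 1)" by simp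
  from mult_right_mono[OF this, of "\<delta>\<^sup>2 * \<beta> ^ (d + 1) * (1 / 2) ^ N"] \<delta> \<beta> show ?thesis
    by (simp add: field_simps power2_eq_square power3_eq_cube)
qed

locale consistent_reconstruction =
  fixes \<mu> :: "'a::euclidean_space measure" and \<delta> :: real
  assumes delta_pos: "0 < \<delta>"
    and prob_space_frame: "prob_space \<mu>"
    and sets_frame: "sets \<mu> = sets borel"
    and AE_frame_unit: "AE \<phi> in \<mu>. norm \<phi> = 1"
begin

abbreviation noise :: "real measure" where
  "noise \<equiv> uniform_measure lborel {-\<delta>..\<delta>}"

abbreviation W :: "nat \<Rightarrow> (nat \<Rightarrow> 'a \<times> real) \<Rightarrow> ennreal" where
  "W N \<omega> \<equiv> worst_case_error N \<delta> (\<lambda>n. fst (\<omega> n)) (\<lambda>n. snd (\<omega> n))"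

sublocale frame: prob_space \<mu>
  by (rule prob_space_frame)

sublocale noise: prob_space noise
  using delta_pos by (intro prob_space_uniform_measure) auto

lemma prob_space_sample: "prob_space (\<mu> \<Otimes>\<^sub>M noise)"
  by (rule prob_space_pair) unfold_locales

lemma prob_space_cr_joint: "prob_space (cr_joint \<mu> \<delta> N)"
  unfolding cr_joint_def by (rule prob_space_PiM) (rule prob_space_sample)

definition nearly_consistent :: "real \<Rightarrow> real \<Rightarrow> 'a \<Rightarrow> ('a \<times> real) set" where
  "nearly_consistent r c x = {p. \<bar>r * inner x (fst p) - snd p\<bar> \<le> \<delta> + c * norm (fst p)}"

lemma sets_nearly_consistent: "nearly_consistent r c x \<in> sets (\<mu> \<Otimes>\<^sub>M noise)"
proof -
  have "{p\<in>space (borel \<Otimes>\<^sub>M borel). \<bar>r * inner x (fst p) - snd (p :: 'a \<times> real)\<bar> \<le> \<delta> + c * norm (fst p)}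
      \<in> sets (borel \<Otimes>\<^sub>M borel)"
    by measurable
  moreover have "sets (\<mu> \<Otimes>\<^sub>M noise) = sets (borel \<Otimes>\<^sub>M borel)"
    by (rule sets_pair_measure_cong) (auto simp: sets_frame)
  ultimately show ?thesis by (simp add: nearly_consistent_def space_pair_measure)
qed

lemma emeasure_nearly_consistent:
  "emeasure (\<mu> \<Otimes>\<^sub>M noise) (nearly_consistent r c x)
    = (\<integral>\<^sup>+ \<phi>. emeasure noise {e. \<bar>r * inner x \<phi> - e\<bar> \<le> \<delta> + c * norm \<phi>} \<partial>\<mu>)"
  by (subst noise.emeasure_pair_measure_alt[OF sets_nearly_consistent])
    (simp add: nearly_consistent_def vimage_def)

lemma sets_inner_abs_le: "{\<phi>. \<bar>inner x \<phi>\<bar> \<le> t} \<in> sets \<mu>"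
proof -
  have "{\<phi>\<in>space borel. \<bar>inner x \<phi>\<bar> \<le> t} \<in> sets borel" by measurable
  then show ?thesis by (simp add: sets_frame)
qed

lemma emeasure_nearly_consistent_le_large_scale:
  assumes r: "0 < r"
  shows "emeasure (\<mu> \<Otimes>\<^sub>M noise) (nearly_consistent r \<delta> x)
    \<le> emeasure \<mu> {\<phi>. \<bar>inner x \<phi>\<bar> \<le> 3 * \<delta> / r}"
proof -
  let ?S = "{\<phi>. \<bar>inner x \<phi>\<bar> \<le> 3 * \<delta> / r}"
  have "AE \<phi> in \<mu>. emeasure noise {e. \<bar>r * inner x \<phi> - e\<bar> \<le> \<delta> + \<delta> * norm \<phi>} \<le> indicator ?S \<phi>"
    using AE_frame_unit
  proof eventually_elim
    case (elim \<phi>)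
    show ?case
    proof (cases "\<phi> \<in> ?S")
      case False
      then have "3 * \<delta> / r < \<bar>inner x \<phi>\<bar>" by simp
      then have "3 * \<delta> < \<bar>inner x \<phi>\<bar> * r"
        using r by (simp add: pos_divide_less_eq)
      then have "3 * \<delta> < \<bar>r * inner x \<phi>\<bar>"
        using r by (simp add: abs_mult mult.commute)
      then have "(\<delta> + (\<delta> + \<delta> * norm \<phi>) - \<bar>r * inner x \<phi>\<bar>) / (2 * \<delta>) \<le> 0"
        using elim delta_pos by (simp add: divide_nonpos_pos)
      then have "ennreal ((\<delta> + (\<delta> + \<delta> * norm \<phi>) - \<bar>r * inner x \<phi>\<bar>) / (2 * \<delta>)) = 0"
        by (rule ennreal_neg)
      then show ?thesis
        using emeasure_uniform_measure_abs_diff_le[OF delta_pos, of "r * inner x \<phi>" "\<delta> + \<delta> * norm \<phi>"]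
        by (metis le_zero_eq zero_le)
    next
      case True
      have "emeasure noise {e. \<bar>r * inner x \<phi> - e\<bar> \<le> \<delta> + \<delta> * norm \<phi>} \<le> 1"
        by (rule noise.emeasure_le_1)
      with True show ?thesis by simp
    qed
  qed
  then have "(\<integral>\<^sup>+ \<phi>. emeasure noise {e. \<bar>r * inner x \<phi> - e\<bar> \<le> \<delta> + \<delta> * norm \<phi>} \<partial>\<mu>)
      \<le> (\<integral>\<^sup>+ \<phi>. indicator ?S \<phi> \<partial>\<mu>)"
    by (rule nn_integral_mono_AE)
  then show ?thesis using sets_inner_abs_le by (simp add: emeasure_nearly_consistent)
qed

text \<open>A frame vector with \<open>|\<langle>x, \<phi>\<rangle>| > t\<^sub>0\<close> leaves a fraction \<open>\<ge> r t\<^sub>0 / (4\<delta>)\<close> of the noise values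
  inconsistent with \<open>r x\<close>.\<close>
lemma emeasure_nearly_consistent_le_moderate_scale:
  assumes r: "0 < r" and t0: "0 < t0" and small: "r * t0 \<le> 4 * \<delta>"
    and half: "measure \<mu> {\<phi>. \<bar>inner x \<phi>\<bar> \<le> t0} \<le> 1 / 2"
  shows "emeasure (\<mu> \<Otimes>\<^sub>M noise) (nearly_consistent r (r * t0 / 2) x) \<le> ennreal (1 - r * t0 / (8 * \<delta>))"
proof -
  let ?S = "{\<phi>. \<bar>inner x \<phi>\<bar> \<le> t0}"
  define k where "k = 1 - r * t0 / (4 * \<delta>)"
  have k: "0 \<le> k" "k \<le> 1" using small delta_pos r t0 by (auto simp: k_def field_simps)
  have space: "space \<mu> = UNIV" using sets_eq_imp_space_eq[OF sets_frame] by simp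
  have "AE \<phi> in \<mu>. emeasure noise {e. \<bar>r * inner x \<phi> - e\<bar> \<le> \<delta> + r * t0 / 2 * norm \<phi>}
      \<le> indicator ?S \<phi> + ennreal k * indicator (space \<mu> - ?S) \<phi>"
    using AE_frame_unit
  proof eventually_elim
    case (elim \<phi>)
    show ?case
    proof (cases "\<phi> \<in> ?S")
      case False
      then have "r * t0 < \<bar>r * inner x \<phi>\<bar>" using r by (simp add: abs_mult)
      then have "(\<delta> + (\<delta> + r * t0 / 2 * norm \<phi>) - \<bar>r * inner x \<phi>\<bar>) / (2 * \<delta>) \<le> k"
        using elim delta_pos by (simp add: k_def field_simps)
      then show ?thesis
        using False space order.trans[OF emeasure_uniform_measure_abs_diff_le[OF delta_pos] ennreal_leI]
        by simp
    next
      case True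
      have "emeasure noise {e. \<bar>r * inner x \<phi> - e\<bar> \<le> \<delta> + r * t0 / 2 * norm \<phi>} \<le> 1"
        by (rule noise.emeasure_le_1)
      with True show ?thesis by simp
    qed
  qed
  then have "emeasure (\<mu> \<Otimes>\<^sub>M noise) (nearly_consistent r (r * t0 / 2) x)
      \<le> (\<integral>\<^sup>+ \<phi>. indicator ?S \<phi> + ennreal k * indicator (space \<mu> - ?S) \<phi> \<partial>\<mu>)"
    unfolding emeasure_nearly_consistent by (rule nn_integral_mono_AE)
  also have "\<dots> \<le> ennreal ((1 + k) / 2)"
    using sets_inner_abs_le half k by (rule frame.nn_integral_indicator_add_scaled_compl_le)
  also have "(1 + k) / 2 = 1 - r * t0 / (8 * \<delta>)" using delta_pos by (simp add: k_def field_simps)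
  finally show ?thesis .
qed

lemma bounded_noise:
  fixes N :: nat
  defines "G \<equiv> {\<omega>\<in>space (cr_joint \<mu> \<delta> N). \<forall>n<N. \<bar>snd (\<omega> n)\<bar> \<le> \<delta>}"
  shows "G \<in> sets (cr_joint \<mu> \<delta> N)" and "emeasure (cr_joint \<mu> \<delta> N) G = 1"
proof -
  define B where "B = space \<mu> \<times> {-\<delta>..\<delta>}"
  have B: "B \<in> sets (\<mu> \<Otimes>\<^sub>M noise)" unfolding B_def by (intro pair_measureI) auto
  have "emeasure (\<mu> \<Otimes>\<^sub>M noise) B = 1"
    unfolding B_def using delta_pos
    by (subst noise.emeasure_pair_measure_Times) (auto simp: frame.emeasure_space_1)
  moreover have G: "G = {\<omega>\<in>space (cr_joint \<mu> \<delta> N). \<forall>n<N. \<omega> n \<in> B}"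
    by (auto simp: G_def B_def cr_joint_def space_PiM space_pair_measure PiE_def Pi_def
        mem_Times_iff abs_le_iff)
  ultimately show "G \<in> sets (cr_joint \<mu> \<delta> N)" "emeasure (cr_joint \<mu> \<delta> N) G = 1"
    using B emeasure_PiM_all_in[OF prob_space_imp_sigma_finite[OF prob_space_sample] B, of N]
    unfolding G cr_joint_def by (measurable, simp)
qed

lemma emeasure_all_nearly_consistent:
  "emeasure (cr_joint \<mu> \<delta> N) {\<omega>\<in>space (cr_joint \<mu> \<delta> N). \<forall>n<N. \<omega> n \<in> nearly_consistent r c x}
    = emeasure (\<mu> \<Otimes>\<^sub>M noise) (nearly_consistent r c x) ^ N"
  unfolding cr_joint_def
  by (rule emeasure_PiM_all_in[OF prob_space_imp_sigma_finite[OF prob_space_sample] sets_nearly_consistent])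

lemma worst_case_error_gt_subset_net:
  assumes r: "0 < r" and c: "0 \<le> c" and net: "\<And>y. norm y = 1 \<Longrightarrow> \<exists>x\<in>S. norm (y - x) \<le> c / r"
  shows "{\<omega>\<in>space (cr_joint \<mu> \<delta> N). (\<forall>n<N. \<bar>snd (\<omega> n)\<bar> \<le> \<delta>) \<and> ennreal r < W N \<omega>}
    \<subseteq> (\<Union>x\<in>S. {\<omega>\<in>space (cr_joint \<mu> \<delta> N). \<forall>n<N. \<omega> n \<in> nearly_consistent r c x})"
proof safe
  fix \<omega> assume \<omega>: "\<omega> \<in> space (cr_joint \<mu> \<delta> N)" "\<forall>n<N. \<bar>snd (\<omega> n)\<bar> \<le> \<delta>" "ennreal r < W N \<omega>"
  have "\<exists>x\<in>S. \<forall>n<N. \<bar>r * inner x (fst (\<omega> n)) - snd (\<omega> n)\<bar> \<le> \<delta> + c * norm (fst (\<omega> n))"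
    using \<omega> by (intro worst_case_error_gt_imp_net_point[OF r c net]) auto
  with \<omega>(1) show "\<omega> \<in> (\<Union>x\<in>S. {\<omega>\<in>space (cr_joint \<mu> \<delta> N). \<forall>n<N. \<omega> n \<in> nearly_consistent r c x})"
    by (auto simp: nearly_consistent_def)
qed

lemma outer_tail_worst_case_error_le_net:
  assumes r: "0 < r" and c: "0 < c" "c \<le> r" and q: "0 \<le> q"
    and sample: "\<And>x. norm x = 1 \<Longrightarrow> emeasure (\<mu> \<Otimes>\<^sub>M noise) (nearly_consistent r c x) \<le> ennreal q"
  shows "outer_tail_le (cr_joint \<mu> \<delta> N) (W N) r
    (ennreal (2 * real DIM('a) * (1 + 2 * r / c) ^ (DIM('a) - 1) * q ^ N))"
proof -
  let ?J = "cr_joint \<mu> \<delta> N"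
  interpret J: prob_space ?J by (rule prob_space_cr_joint)
  obtain S :: "'a set" where S: "finite S" "S \<subseteq> sphere 0 1"
    "real (card S) \<le> 2 * real DIM('a) * (1 + 2 * r / c) ^ (DIM('a) - 1)"
    "\<And>y. norm y = 1 \<Longrightarrow> \<exists>x\<in>S. norm (y - x) \<le> c / r"
    using sphere_net_exists[of "c / r"] c r by auto
  define G where "G = {\<omega>\<in>space ?J. \<forall>n<N. \<bar>snd (\<omega> n)\<bar> \<le> \<delta>}"
  define A where "A x = {\<omega>\<in>space ?J. \<forall>n<N. \<omega> n \<in> nearly_consistent r c x}" for x
  define E where "E = (space ?J - G) \<union> (\<Union>x\<in>S. A x)"
  have A: "A x \<in> sets ?J" for x
    unfolding A_def cr_joint_def using sets_nearly_consistent by measurable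
  have G: "G \<in> sets ?J" "emeasure ?J G = 1" unfolding G_def by (rule bounded_noise)+
  have "{\<omega>\<in>space ?J. ennreal r < W N \<omega>} \<subseteq> E"
    using worst_case_error_gt_subset_net[OF r less_imp_le[OF c(1)] S(4), of N]
    by (auto simp: E_def G_def A_def)
  moreover have "E \<in> sets ?J" using A G S(1) by (auto simp: E_def)
  moreover have "emeasure ?J E \<le> ennreal (2 * real DIM('a) * (1 + 2 * r / c) ^ (DIM('a) - 1) * q ^ N)"
  proof -
    have "emeasure ?J E \<le> emeasure ?J (space ?J - G) + emeasure ?J (\<Union>x\<in>S. A x)"
      unfolding E_def by (rule emeasure_subadditive) (use A G S(1) in auto)
    also have "emeasure ?J (space ?J - G) = 0"
      using G by (simp add: emeasure_compl J.emeasure_space_1)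
    also have "emeasure ?J (\<Union>x\<in>S. A x) \<le> (\<Sum>x\<in>S. emeasure ?J (A x))"
      by (rule emeasure_subadditive_finite) (use S(1) A in auto)
    also have "\<dots> \<le> (\<Sum>x\<in>S. ennreal q ^ N)"
      using S(2) sample unfolding A_def emeasure_all_nearly_consistent
      by (intro sum_mono power_mono) auto
    also have "\<dots> = ennreal (real (card S) * q ^ N)"
      using q by (simp add: ennreal_power ennreal_of_nat_eq_real_of_nat ennreal_mult)
    also have "\<dots> \<le> ennreal (2 * real DIM('a) * (1 + 2 * r / c) ^ (DIM('a) - 1) * q ^ N)"
      using S(3) q by (intro ennreal_leI mult_right_mono) auto
    finally show ?thesis by simp
  qed
  ultimately show ?thesis unfolding outer_tail_le_def by blast
qed

end

locale anticoncentrated_reconstruction = consistent_reconstruction +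
  fixes \<alpha> s :: real
  assumes alpha_ge_1: "1 \<le> \<alpha>" and s_pos: "0 < s"
    and small_ball: "\<And>x t. norm x = 1 \<Longrightarrow> 0 \<le> t \<Longrightarrow> t \<le> 1 \<Longrightarrow>
      measure \<mu> {\<phi>. \<bar>inner x \<phi>\<bar> \<le> t} \<le> \<alpha> * t powr s"
begin

text \<open>At scale \<open>1/\<beta>\<close> the small ball bound \<open>\<alpha> t\<^sup>s\<close> equals \<open>1/2\<close>.\<close>
definition \<beta> :: real where
  "\<beta> = (2 * \<alpha>) powr (1 / s)"

lemma beta_ge_1: "1 \<le> \<beta>"
  unfolding \<beta>_def using alpha_ge_1 s_pos by (intro ge_one_powr_ge_zero) auto

lemma beta_powr_s: "\<beta> powr s = 2 * \<alpha>"
  unfolding \<beta>_def using alpha_ge_1 s_pos by (simp add: powr_powr)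

lemma beta_power: "\<beta> ^ n = (2 * \<alpha>) powr (real n / s)"
proof -
  have "\<beta> ^ n = \<beta> powr real n" using beta_ge_1 by (simp add: powr_realpow)
  also have "\<dots> = (2 * \<alpha>) powr (real n / s)" by (simp add: \<beta>_def powr_powr)
  finally show ?thesis .
qed

lemma small_ball_inverse_beta:
  assumes "norm x = 1"
  shows "measure \<mu> {\<phi>. \<bar>inner x \<phi>\<bar> \<le> 1 / \<beta>} \<le> 1 / 2"
proof -
  have "\<alpha> * (1 / \<beta>) powr s = 1 / 2"
    using beta_ge_1 beta_powr_s alpha_ge_1 by (simp add: powr_divide)
  then show ?thesis using small_ball[OF assms, of "1 / \<beta>"] beta_ge_1 by simp
qed

lemma outer_tail_moderate_scale:
  assumes r: "0 < r" "r < 4 * \<delta> * \<beta>"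
  shows "outer_tail_le (cr_joint \<mu> \<delta> N) (W N) r
    (ennreal (2 * real DIM('a) * (1 + 4 * \<beta>) ^ (DIM('a) - 1) * exp (- (real N * r / (8 * \<delta> * \<beta>)))))"
proof -
  define q where "q = 1 - r / (8 * \<delta> * \<beta>)"
  have \<beta>: "0 < \<beta>" using beta_ge_1 by simp
  have q: "0 \<le> q" using r delta_pos \<beta> by (simp add: q_def field_simps)
  have "r * (1 / \<beta>) \<le> 4 * \<delta>" using r \<beta> by (simp add: field_simps)
  then have sample: "emeasure (\<mu> \<Otimes>\<^sub>M noise) (nearly_consistent r (r * (1 / \<beta>) / 2) x) \<le> ennreal q"
    if "norm x = 1" for x
    using emeasure_nearly_consistent_le_moderate_scale[OF r(1) _ _ small_ball_inverse_beta[OF that]] \<beta>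
    by (simp add: q_def mult_ac)
  have "outer_tail_le (cr_joint \<mu> \<delta> N) (W N) r
      (ennreal (2 * real DIM('a) * (1 + 2 * r / (r * (1 / \<beta>) / 2)) ^ (DIM('a) - 1) * q ^ N))"
    using r beta_ge_1 by (intro outer_tail_worst_case_error_le_net q sample) (auto simp: field_simps)
  moreover have "2 * real DIM('a) * (1 + 2 * r / (r * (1 / \<beta>) / 2)) ^ (DIM('a) - 1) * q ^ N
      \<le> 2 * real DIM('a) * (1 + 4 * \<beta>) ^ (DIM('a) - 1) * exp (- (real N * r / (8 * \<delta> * \<beta>)))"
  proof -
    have "2 * r / (r * (1 / \<beta>) / 2) = 4 * \<beta>" using r by simp
    moreover have "q ^ N \<le> exp (- (real N * r / (8 * \<delta> * \<beta>)))"
      using one_minus_power_le_exp[of "r / (8 * \<delta> * \<beta>)" N] q r delta_pos \<beta> by (simp add: q_def)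
    ultimately show ?thesis using \<beta> by (simp add: mult_left_mono)
  qed
  ultimately show ?thesis by (elim outer_tail_le_mono) (rule ennreal_leI)
qed

lemma outer_tail_large_scale:
  assumes N: "real DIM('a) + 2 \<le> real N * s" and r: "4 * \<delta> * \<beta> \<le> r"
  shows "outer_tail_le (cr_joint \<mu> \<delta> N) (W N) r
    (ennreal (2 * real DIM('a) * 3 ^ (2 * DIM('a) + 1) * \<beta> ^ (DIM('a) + 2) * \<delta> ^ 3 * (1 / 2) ^ N / r ^ 3))"
proof -
  have "4 * \<delta> \<le> 4 * \<delta> * \<beta>" using mult_left_mono[OF beta_ge_1, of "4 * \<delta>"] delta_pos by simp
  then have "3 * \<delta> \<le> r" using r delta_pos by linarith
  then have r0: "0 < r" and ratio: "3 * \<delta> / r \<le> 1" using delta_pos by simp_all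
  define q where "q = \<alpha> * (3 * \<delta> / r) powr s"
  have sample: "emeasure (\<mu> \<Otimes>\<^sub>M noise) (nearly_consistent r \<delta> x) \<le> ennreal q" if "norm x = 1" for x
  proof -
    have "emeasure (\<mu> \<Otimes>\<^sub>M noise) (nearly_consistent r \<delta> x) \<le> emeasure \<mu> {\<phi>. \<bar>inner x \<phi>\<bar> \<le> 3 * \<delta> / r}"
      by (rule emeasure_nearly_consistent_le_large_scale[OF r0])
    also have "\<dots> \<le> ennreal q"
      using small_ball[OF that _ ratio] delta_pos r0
      by (simp add: frame.emeasure_eq_measure q_def ennreal_leI)
    finally show ?thesis .
  qed
  have "outer_tail_le (cr_joint \<mu> \<delta> N) (W N) r
      (ennreal (2 * real DIM('a) * (1 + 2 * r / \<delta>) ^ (DIM('a) - 1) * q ^ N))"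
    using r0 delta_pos \<open>3 * \<delta> \<le> r\<close> alpha_ge_1
    by (intro outer_tail_worst_case_error_le_net sample) (auto simp: q_def)
  then show ?thesis
    unfolding q_def using delta_pos beta_ge_1 s_pos beta_powr_s N r
    by (elim outer_tail_le_mono) (intro ennreal_leI large_tail_le, auto simp: DIM_positive Suc_leI)
qed

lemma outer_tail_worst_case_error:
  fixes N :: nat and a b C :: real
  assumes a_def: "a = real N / (8 * \<delta> * \<beta>)"
    and b_def: "b = 2 * (ln (2 * real DIM('a) * (1 + 4 * \<beta>) ^ (DIM('a) - 1)) + 1) / a"
    and C_def: "C = 2 * real DIM('a) * 3 ^ (2 * DIM('a) + 1) * \<beta> ^ (DIM('a) + 2) * \<delta> ^ 3 * (1 / 2) ^ N"
    and N: "real DIM('a) + 2 \<le> real N * s" and r: "0 < r"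
  shows "outer_tail_le (cr_joint \<mu> \<delta> N) (W N) r
    (ennreal ((if r \<le> b then 1 else 216 / a ^ 3 / r ^ 3) + (if 4 * \<delta> * \<beta> \<le> r then C / r ^ 3 else 0)))"
proof -
  interpret J: prob_space "cr_joint \<mu> \<delta> N" by (rule prob_space_cr_joint)
  have "0 < real N * s" using N by linarith
  then have a: "0 < a" using s_pos delta_pos beta_ge_1 by (simp add: a_def zero_less_mult_iff)
  have C: "0 \<le> C" using delta_pos beta_ge_1 by (simp add: C_def)
  consider "r \<le> b" | "b < r" "r < 4 * \<delta> * \<beta>" | "4 * \<delta> * \<beta> \<le> r" by linarith
  then show ?thesis
  proof cases
    case 1
    then show ?thesis using C r by (intro outer_tail_le_space) (simp add: J.emeasure_space_1)
  next
    case 2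
    let ?M = "2 * real DIM('a) * (1 + 4 * \<beta>) ^ (DIM('a) - 1)"
    have "1 \<le> ?M" using beta_ge_1 DIM_positive[where 'a='a]
      by (intro mult_ge1_I one_le_power) (auto simp del: DIM_positive)
    then have "?M * exp (- (a * r)) \<le> 216 / (a ^ 3 * r ^ 3)"
      using 2 a by (intro mult_exp_le_inverse_cube) (simp_all add: b_def)
    moreover have "real N * r / (8 * \<delta> * \<beta>) = a * r" by (simp add: a_def)
    ultimately show ?thesis
      using outer_tail_moderate_scale[OF r 2(2), of N] 2
      by (elim outer_tail_le_mono) (auto intro!: ennreal_leI)
  next
    case 3
    have "0 \<le> (if r \<le> b then 1 else 216 / a ^ 3 / r ^ 3)" using a r by simp
    with 3 show ?thesis
      using outer_tail_large_scale[OF N 3] by (elim outer_tail_le_mono) (simp add: C_def ennreal_leI)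
  qed
qed

lemma nn_integral_worst_case_error_square_le:
  assumes N: "(real DIM('a) + 2) / s \<le> real N"
  shows "(\<integral>\<^sup>+ \<omega>. (W N \<omega>)\<^sup>2 \<partial>cr_joint \<mu> \<delta> N)
    \<le> ennreal (10^5 * \<delta>^2 * (real DIM('a))^2 * (2*\<alpha>) powr (2/s) * (ln (16 * (2*\<alpha>) powr (1/s)))^2
                / ((real N + 1) * (real N + 2))
              + \<delta>^2 * 32 ^ (DIM('a) + 1) * (2*\<alpha>) powr ((real DIM('a) + 1) / s) * (1/2) ^ N)"
proof -
  define d where "d = DIM('a)"
  define K where "K = ln (2 * real d * (1 + 4 * \<beta>) ^ (d - 1)) + 1"
  define a where "a = real N / (8 * \<delta> * \<beta>)"
  define C where "C = 2 * real d * 3 ^ (2 * d + 1) * \<beta> ^ (d + 2) * \<delta> ^ 3 * (1 / 2) ^ N"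
  have d: "1 \<le> d" by (simp add: d_def DIM_positive Suc_leI)
  have Ns: "real d + 2 \<le> real N * s" using N s_pos by (simp add: d_def pos_divide_le_eq)
  then have N1: "1 \<le> N" using s_pos by (cases N) auto
  have a: "0 < a" using N1 delta_pos beta_ge_1 by (simp add: a_def)
  have K: "1 \<le> K" "K \<le> 2 * real d * ln (16 * \<beta>)"
    using ln_net_size_le[OF beta_ge_1 d] beta_ge_1 d by (auto simp: K_def intro!: mult_ge1_I one_le_power)
  interpret J: prob_space "cr_joint \<mu> \<delta> N" by (rule prob_space_cr_joint)
  have moderate: "(2 * K / a)\<^sup>2 + 2 * (216 / a ^ 3) / (2 * K / a)
      \<le> 10^5 * \<delta>\<^sup>2 * (real d)\<^sup>2 * \<beta>\<^sup>2 * (ln (16 * \<beta>))\<^sup>2 / ((real N + 1) * (real N + 2))"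
    using d by (intro moderate_tail_contribution_le[OF delta_pos beta_ge_1 _ N1 K a_def]) simp
  have large: "2 * C / (4 * \<delta> * \<beta>) \<le> \<delta>\<^sup>2 * 32 ^ (d + 1) * \<beta> ^ (d + 1) * (1 / 2) ^ N"
    unfolding C_def using delta_pos beta_ge_1 by (intro large_tail_contribution_le) auto
  have tail: "outer_tail_le (cr_joint \<mu> \<delta> N) (W N) r (ennreal ((if r \<le> 2 * K / a then 1 else 216 / a ^ 3 / r ^ 3)
      + (if 4 * \<delta> * \<beta> \<le> r then C / r ^ 3 else 0)))" if "0 < r" for r
    unfolding K_def d_def
    by (rule outer_tail_worst_case_error[OF a_def refl C_def[unfolded d_def] Ns[unfolded d_def] that])
  have "(\<integral>\<^sup>+ \<omega>. (W N \<omega>)\<^sup>2 \<partial>cr_joint \<mu> \<delta> N)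
      \<le> ennreal ((2 * K / a)\<^sup>2 + 2 * (216 / a ^ 3) / (2 * K / a) + 2 * C / (4 * \<delta> * \<beta>))"
    using a K delta_pos beta_ge_1
    by (intro nn_integral_square_le_of_tails[OF J.finite_measure_axioms _ _ _ _ tail]) (auto simp: C_def)
  also have "\<dots> \<le> ennreal (10^5 * \<delta>\<^sup>2 * (real d)\<^sup>2 * \<beta>\<^sup>2 * (ln (16 * \<beta>))\<^sup>2 / ((real N + 1) * (real N + 2))
      + \<delta>\<^sup>2 * 32 ^ (d + 1) * \<beta> ^ (d + 1) * (1 / 2) ^ N)"
    by (intro ennreal_leI add_mono moderate large)
  finally have bound: "(\<integral>\<^sup>+ \<omega>. (W N \<omega>)\<^sup>2 \<partial>cr_joint \<mu> \<delta> N) \<le> ennreal (10^5 * \<delta>\<^sup>2 * (real d)\<^sup>2 * \<beta>\<^sup>2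
      * (ln (16 * \<beta>))\<^sup>2 / ((real N + 1) * (real N + 2)) + \<delta>\<^sup>2 * 32 ^ (d + 1) * \<beta> ^ (d + 1) * (1 / 2) ^ N)" .
  have "\<beta>\<^sup>2 = (2 * \<alpha>) powr (2 / s)" "\<beta> ^ (d + 1) = (2 * \<alpha>) powr ((real d + 1) / s)"
    using beta_power[of 2] beta_power[of "d + 1"] by (simp_all add: add.commute)
  from bound[unfolded this] show ?thesis unfolding d_def \<beta>_def .
qed

end

theorem theorem5p5:
  fixes \<mu> :: "'a::euclidean_space measure"
    and \<delta> \<alpha> s :: real and N :: nat
  assumes "\<delta> > 0"
    and "prob_space \<mu>" and "sets \<mu> = sets borel"
    and "AE x in \<mu>. norm x = 1"
    and "\<alpha> \<ge> 1" and "s > 0"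
    and "\<And>x t. norm x = 1 \<Longrightarrow> 0 \<le> t \<Longrightarrow> t \<le> 1 \<Longrightarrow>
           measure \<mu> {\<phi>. \<bar>inner x \<phi>\<bar> \<le> t} \<le> \<alpha> * t powr s"
    and "real N \<ge> (real DIM('a) + 2) / s"
  shows "(\<integral>\<^sup>+ \<omega>. (worst_case_error N \<delta> (\<lambda>n. fst (\<omega> n)) (\<lambda>n. snd (\<omega> n)))\<^sup>2 \<partial>cr_joint \<mu> \<delta> N)
    \<le> ennreal (10^5 * \<delta>^2 * (real DIM('a))^2 * (2*\<alpha>) powr (2/s) * (ln (16 * (2*\<alpha>) powr (1/s)))^2
                / ((real N + 1) * (real N + 2))
              + \<delta>^2 * 32 ^ (DIM('a) + 1) * (2*\<alpha>) powr ((real DIM('a) + 1) / s) * (1/2) ^ N)"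
proof -
  interpret anticoncentrated_reconstruction \<mu> \<delta> \<alpha> s
    by (intro anticoncentrated_reconstruction.intro consistent_reconstruction.intro
        anticoncentrated_reconstruction_axioms.intro) (fact assms)+
  show ?thesis using assms(8) by (rule nn_integral_worst_case_error_square_le)
qed

end
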